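(* Let $S \subseteq \mathbb{R}^n$ be nonempty, closed and convex, let $F = (F_1,\dots,F_m)^\top \colon S\to\mathbb{R}^m$ be continuous with each $F_i$ $\sigma_i$-convex for some $\sigma_i > 0$, let $\ell \ge 0$, and define $u_\ell(x) := \sup_{y \in S}\min_{i=1,\dots,m}\{F_i(x) - F_i(y) - \frac{\ell}{2}\|x-y\|^2\}$, $x \in S$. Let $\sigma := \min_{i} \sigma_i$ and \[ \upsilon(\sigma) := \begin{cases} \frac{\sigma - \ell}{2}, & \text{if } \ell < \sigma/2,\\ \frac{\sigma^2}{8\ell}, & \text{otherwise}. \end{cases} \] Then $u_\ell(x) \ge \upsilon(\sigma) \inf_{x^\ast \in X^\ast}\|x - x^\ast\|^2$ for all $x \in S$, where $X^\ast$ is the set of Pareto optimal solutions of $\min_{x\in S}F(x)$.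
   Context: A function $h\colon S\to\mathbb{R}$ is $\sigma$-convex if $h(\alpha x + (1-\alpha)y) \le \alpha h(x) + (1-\alpha)h(y) - \frac{\alpha(1-\alpha)\sigma}{2}\|x-y\|^2$ for all $x,y\in S$, $\alpha\in[0,1]$. A point $x^\ast\in S$ is Pareto optimal if there is no $x\in S$ with $F_i(x)\le F_i(x^\ast)$ for all $i$ and $F(x)\ne F(x^\ast)$. *)

theory Defs
  imports "HOL-Analysis.Analysis"
begin

definition sigma_convex_on :: "'a::real_normed_vector set \<Rightarrow> real \<Rightarrow> ('a \<Rightarrow> real) \<Rightarrow> bool" where
  "sigma_convex_on S \<sigma> h \<longleftrightarrow>
     (\<forall>x\<in>S. \<forall>y\<in>S. \<forall>\<alpha>::real. 0 \<le> \<alpha> \<and> \<alpha> \<le> 1 \<longrightarrow>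
        h (\<alpha> *\<^sub>R x + (1 - \<alpha>) *\<^sub>R y)
          \<le> \<alpha> * h x + (1 - \<alpha>) * h y - \<alpha> * (1 - \<alpha>) * \<sigma> / 2 * (norm (x - y))\<^sup>2)"

definition pareto_optimal :: "'a set \<Rightarrow> nat \<Rightarrow> (nat \<Rightarrow> 'a \<Rightarrow> real) \<Rightarrow> 'a \<Rightarrow> bool" where
  "pareto_optimal S m F xs \<longleftrightarrow> xs \<in> S \<and>
     \<not> (\<exists>x\<in>S. (\<forall>i<m. F i x \<le> F i xs) \<and> (\<exists>i<m. F i x \<noteq> F i xs))"

definition merit_u :: "'a::real_normed_vector set \<Rightarrow> nat \<Rightarrow> (nat \<Rightarrow> 'a \<Rightarrow> real) \<Rightarrow> real \<Rightarrow> 'a \<Rightarrow> real" where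
  "merit_u S m F l x = (SUP y\<in>S. Min ((\<lambda>i. F i x - F i y - l / 2 * (norm (x - y))\<^sup>2) ` {..<m}))"

definition upsilon :: "real \<Rightarrow> real \<Rightarrow> real" where
  "upsilon l \<sigma> = (if l < \<sigma> / 2 then (\<sigma> - l) / 2 else \<sigma>\<^sup>2 / (8 * l))"

end

theory Submission
  imports Defs
begin

(* Fix x and let phi y = max_i (F_i y - F_i x).  Being sigma-convex, phi has a minimiser x* on S
   and grows quadratically away from it: phi x* + sigma/2 |y - x*|^2 <= phi y.  Quadratic growth makes
   x* Pareto optimal (a point dominating x* would be a second minimiser) and, at y = x, shows that
   every F_i drops by at least sigma/2 |x - x*|^2 from x to x*.  Testing the supremum in u_l at
   x + a (x* - x) with a = 1 (if l < sigma/2) or a = sigma/(2 l) then gives the bound. *)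

lemma sigma_convex_onD:
  assumes "sigma_convex_on S \<sigma> h" "x \<in> S" "y \<in> S" "0 \<le> a" "a \<le> 1"
  shows "h (a *\<^sub>R x + (1 - a) *\<^sub>R y) \<le> a * h x + (1 - a) * h y - a * (1 - a) * \<sigma> / 2 * (norm (x - y))\<^sup>2"
  using assms unfolding sigma_convex_on_def by blast

lemma sigma_convex_on_antimono:
  assumes "sigma_convex_on S \<sigma> h" "\<tau> \<le> \<sigma>"
  shows "sigma_convex_on S \<tau> h"
  unfolding sigma_convex_on_def
proof (intro ballI allI impI)
  fix x y and a :: real
  assume xy: "x \<in> S" "y \<in> S" and a: "0 \<le> a \<and> a \<le> 1"
  have "a * (1 - a) * \<tau> / 2 * (norm (x - y))\<^sup>2 \<le> a * (1 - a) * \<sigma> / 2 * (norm (x - y))\<^sup>2"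
    using a assms(2) by (intro mult_right_mono divide_right_mono mult_left_mono) auto
  with sigma_convex_onD[OF assms(1) xy] a
  show "h (a *\<^sub>R x + (1 - a) *\<^sub>R y) \<le> a * h x + (1 - a) * h y - a * (1 - a) * \<tau> / 2 * (norm (x - y))\<^sup>2"
    by fastforce
qed

lemma sigma_convex_on_diff_const:
  "sigma_convex_on S \<sigma> h \<Longrightarrow> sigma_convex_on S \<sigma> (\<lambda>y. h y - c)"
  unfolding sigma_convex_on_def by (simp add: algebra_simps)

lemma sigma_convex_on_Max:
  assumes "finite I" "I \<noteq> {}" "\<And>i. i \<in> I \<Longrightarrow> sigma_convex_on S \<sigma> (g i)"
  shows "sigma_convex_on S \<sigma> (\<lambda>y. Max ((\<lambda>i. g i y) ` I))"
  unfolding sigma_convex_on_def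
proof (intro ballI allI impI)
  fix x y and a :: real
  assume xy: "x \<in> S" "y \<in> S" and a: "0 \<le> a \<and> a \<le> 1"
  let ?bound = "a * Max ((\<lambda>i. g i x) ` I) + (1 - a) * Max ((\<lambda>i. g i y) ` I)
                - a * (1 - a) * \<sigma> / 2 * (norm (x - y))\<^sup>2"
  have "g i (a *\<^sub>R x + (1 - a) *\<^sub>R y) \<le> ?bound" if i: "i \<in> I" for i
  proof -
    have "g i (a *\<^sub>R x + (1 - a) *\<^sub>R y) \<le> a * g i x + (1 - a) * g i y - a * (1 - a) * \<sigma> / 2 * (norm (x - y))\<^sup>2"
      using sigma_convex_onD[OF assms(3)[OF i] xy] a by blast
    moreover have "a * g i x \<le> a * Max ((\<lambda>i. g i x) ` I)" "(1 - a) * g i y \<le> (1 - a) * Max ((\<lambda>i. g i y) ` I)"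
      using a i assms(1) by (auto intro!: mult_left_mono)
    ultimately show ?thesis by linarith
  qed
  then show "Max ((\<lambda>i. g i (a *\<^sub>R x + (1 - a) *\<^sub>R y)) ` I) \<le> ?bound"
    using assms(1,2) by (subst Max_le_iff) auto
qed

lemma continuous_on_Max:
  fixes g :: "'i \<Rightarrow> 'a::topological_space \<Rightarrow> 'b::linorder_topology"
  assumes "finite I" "I \<noteq> {}" "\<And>i. i \<in> I \<Longrightarrow> continuous_on S (g i)"
  shows "continuous_on S (\<lambda>y. Max ((\<lambda>i. g i y) ` I))"
  using assms
proof (induction I rule: finite_ne_induct)
  case (insert j I)
  then have "(\<lambda>y. Max ((\<lambda>i. g i y) ` insert j I)) = (\<lambda>y. max (g j y) (Max ((\<lambda>i. g i y) ` I)))"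
    by simp
  with insert show ?case by (auto intro!: continuous_on_max)
qed simp

lemma sigma_convex_on_quadratic_growth:
  assumes "sigma_convex_on S \<sigma> h" "convex S" "z \<in> S" "\<And>y. y \<in> S \<Longrightarrow> h z \<le> h y" "x \<in> S"
  shows "h z + \<sigma> / 2 * (norm (x - z))\<^sup>2 \<le> h x"
proof -
  have "b * (\<sigma> / 2 * (norm (x - z))\<^sup>2) \<le> h x - h z" if b: "0 < b" "b < 1" for b
  proof -
    have "h z \<le> h ((1 - b) *\<^sub>R x + (1 - (1 - b)) *\<^sub>R z)"
      using assms(2-5) b by (intro assms(4) convexD) auto
    also have "\<dots> \<le> (1 - b) * h x + (1 - (1 - b)) * h z - (1 - b) * (1 - (1 - b)) * \<sigma> / 2 * (norm (x - z))\<^sup>2"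
      using b by (intro sigma_convex_onD[OF assms(1,5,3)]) auto
    finally have "(1 - b) * (b * (\<sigma> / 2 * (norm (x - z))\<^sup>2)) \<le> (1 - b) * (h x - h z)"
      by (simp add: algebra_simps)
    then show ?thesis using b by simp
  qed
  then have "\<sigma> / 2 * (norm (x - z))\<^sup>2 \<le> h x - h z"
    by (rule field_le_mult_one_interval)
  then show ?thesis by simp
qed

lemma sigma_convex_on_proximal_decrease:
  assumes "sigma_convex_on S \<sigma> h" "x \<in> S" "z \<in> S" "0 \<le> a" "a \<le> 1"
    and decrease: "h z + \<sigma> / 2 * (norm (x - z))\<^sup>2 \<le> h x"
  shows "(2 * a * \<sigma> - a\<^sup>2 * (\<sigma> + l)) / 2 * (norm (x - z))\<^sup>2
           \<le> h x - h (a *\<^sub>R z + (1 - a) *\<^sub>R x) - l / 2 * (norm (x - (a *\<^sub>R z + (1 - a) *\<^sub>R x)))\<^sup>2"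
proof -
  define D where "D = (norm (x - z))\<^sup>2"
  have "h (a *\<^sub>R z + (1 - a) *\<^sub>R x) \<le> a * h z + (1 - a) * h x - a * (1 - a) * \<sigma> / 2 * D"
    using sigma_convex_onD[OF assms(1,3,2,4,5)] unfolding D_def by (simp add: norm_minus_commute)
  moreover have "a * (\<sigma> / 2 * D) \<le> a * (h x - h z)"
    using decrease assms(4) unfolding D_def by (intro mult_left_mono) auto
  moreover have "x - (a *\<^sub>R z + (1 - a) *\<^sub>R x) = a *\<^sub>R (x - z)"
    by (simp add: algebra_simps)
  then have "(norm (x - (a *\<^sub>R z + (1 - a) *\<^sub>R x)))\<^sup>2 = a\<^sup>2 * D"
    unfolding D_def by (simp add: power_mult_distrib)
  ultimately show ?thesis
    unfolding D_def[symmetric] by (simp add: field_simps power2_eq_square)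
qed

lemma upsilon_nonneg: "l \<ge> 0 \<Longrightarrow> upsilon l \<sigma> \<ge> 0"
  unfolding upsilon_def by auto

lemma upsilon_le_proximal_decrease:
  assumes "\<sigma> > 0" "l \<ge> 0"
  obtains a where "0 < a" "a \<le> 1" "upsilon l \<sigma> \<le> (2 * a * \<sigma> - a\<^sup>2 * (\<sigma> + l)) / 2"
proof (cases "l < \<sigma> / 2")
  case True
  then show ?thesis by (intro that[of 1]) (simp_all add: upsilon_def)
next
  case False
  then have l: "l > 0" "\<sigma> \<le> 2 * l" using assms by auto
  have "(2 * (\<sigma> / (2 * l)) * \<sigma> - (\<sigma> / (2 * l))\<^sup>2 * (\<sigma> + l)) / 2 - upsilon l \<sigma>
          = \<sigma>\<^sup>2 * (2 * l - \<sigma>) / (8 * l\<^sup>2)"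
    using False l by (simp add: upsilon_def field_simps power2_eq_square)
  also have "\<dots> \<ge> 0" using l by simp
  finally show ?thesis using assms l by (intro that[of "\<sigma> / (2 * l)"]) auto
qed

lemma sigma_convex_on_gt_outside_cball:
  fixes S :: "'a::{real_normed_vector, heine_borel} set"
  assumes "closed S" "convex S" "continuous_on S h" "\<sigma> > 0" "sigma_convex_on S \<sigma> h" "x \<in> S"
  obtains r where "r > 0" "\<And>y. y \<in> S \<Longrightarrow> r < norm (y - x) \<Longrightarrow> h x < h y"
proof -
  obtain z0 where z0: "z0 \<in> S \<inter> cball x 1" "\<And>z. z \<in> S \<inter> cball x 1 \<Longrightarrow> h z0 \<le> h z"
    using continuous_attains_inf[of "S \<inter> cball x 1" h] assms(1,3,6)
    by (metis IntI closed_Int_compact compact_cball centre_in_cball continuous_on_subset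
        empty_iff inf_le1 zero_le_one)
  define r where "r = 2 + 2 * \<bar>h x - h z0\<bar> / \<sigma>"
  have r: "r \<ge> 2" unfolding r_def using assms(4) by simp
  \<comment> \<open>At the point z of [x, y] at distance 1 from x, strong convexity subtracts a penalty
      (R - 1) sigma/2 that eventually exceeds h x - h z0, where h z0 is the minimum on the unit ball.\<close>
  have "h x < h y" if y: "y \<in> S" "r < norm (y - x)" for y
  proof -
    define R where "R = norm (y - x)"
    have R: "R > 1" using y r unfolding R_def by linarith
    have weight: "0 \<le> 1 / R" "1 / R \<le> 1" using R by auto
    define z where "z = (1 / R) *\<^sub>R y + (1 - 1 / R) *\<^sub>R x"
    have "x - z = (1 / R) *\<^sub>R (x - y)" unfolding z_def by (simp add: algebra_simps)
    then have "dist x z = 1" using R by (auto simp: dist_norm R_def norm_minus_commute)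
    moreover have "z \<in> S" unfolding z_def using R assms(2,6) y(1) by (intro convexD) auto
    ultimately have "h z0 \<le> h z" using z0(2) by simp
    also have "h z \<le> (1 / R) * h y + (1 - 1 / R) * h x - (1 / R) * (1 - 1 / R) * \<sigma> / 2 * R\<^sup>2"
      using sigma_convex_onD[OF assms(5) y(1) assms(6) weight] unfolding z_def R_def .
    also have "\<dots> = h x + (h y - h x) / R - (R - 1) * \<sigma> / 2"
      using R by (simp add: field_simps power2_eq_square)
    finally have "(R - 1) * \<sigma> / 2 - (h x - h z0) \<le> (h y - h x) / R" by simp
    moreover have "h x - h z0 < (R - 1) * \<sigma> / 2"
    proof -
      have "2 * \<bar>h x - h z0\<bar> / \<sigma> < R - 2" using y unfolding R_def r_def by linarith
      then have "2 * \<bar>h x - h z0\<bar> < (R - 2) * \<sigma>" using assms(4) by (simp add: pos_divide_less_eq)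
      then show ?thesis using abs_ge_self[of "h x - h z0"] assms(4) by (simp add: algebra_simps)
    qed
    ultimately have "0 < (h y - h x) / R" by linarith
    then show ?thesis using R by (simp add: zero_less_divide_iff)
  qed
  with r show ?thesis by (intro that[of r]) auto
qed

lemma sigma_convex_on_attains_min:
  fixes S :: "'a::{real_normed_vector, heine_borel} set"
  assumes "S \<noteq> {}" "closed S" "convex S" "continuous_on S h" "\<sigma> > 0" "sigma_convex_on S \<sigma> h"
  obtains z where "z \<in> S" "\<And>y. y \<in> S \<Longrightarrow> h z \<le> h y"
proof -
  obtain x where x: "x \<in> S" using assms(1) by blast
  obtain r where r: "r > 0" "\<And>y. y \<in> S \<Longrightarrow> r < norm (y - x) \<Longrightarrow> h x < h y"
    using sigma_convex_on_gt_outside_cball[OF assms(2-6) x] by blast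
  have x_in: "x \<in> S \<inter> cball x r" using x r(1) by simp
  obtain z where z: "z \<in> S \<inter> cball x r" "\<And>y. y \<in> S \<inter> cball x r \<Longrightarrow> h z \<le> h y"
    using continuous_attains_inf[of "S \<inter> cball x r" h] x_in assms(2,4)
    by (metis closed_Int_compact compact_cball continuous_on_subset empty_iff inf_le1)
  have "h z \<le> h y" if "y \<in> S" for y
  proof (cases "r < norm (y - x)")
    case True
    then show ?thesis using r(2)[OF that] z(2)[OF x_in] by linarith
  next
    case False
    then show ?thesis using that z(2) by (simp add: dist_norm norm_minus_commute)
  qed
  then show ?thesis using z(1) that by blast
qed

lemma exists_pareto_optimal_uniform_decrease:
  fixes S :: "'a::{real_normed_vector, heine_borel} set"
  assumes "closed S" "convex S" "0 < m" "\<sigma> > 0"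
    and "\<And>i. i < m \<Longrightarrow> continuous_on S (F i)"
    and "\<And>i. i < m \<Longrightarrow> sigma_convex_on S \<sigma> (F i)"
    and "x \<in> S"
  obtains z where "pareto_optimal S m F z" "\<And>i. i < m \<Longrightarrow> F i z + \<sigma> / 2 * (norm (x - z))\<^sup>2 \<le> F i x"
proof -
  define \<phi> where "\<phi> y = Max ((\<lambda>i. F i y - F i x) ` {..<m})" for y
  have ne: "{..<m} \<noteq> {}" using assms(3) by auto
  have \<phi>_sc: "sigma_convex_on S \<sigma> \<phi>"
    unfolding \<phi>_def using ne assms(6) by (intro sigma_convex_on_Max sigma_convex_on_diff_const) auto
  have "continuous_on S \<phi>"
    unfolding \<phi>_def using ne assms(5) by (intro continuous_on_Max continuous_intros) auto
  then obtain z where z: "z \<in> S" "\<And>y. y \<in> S \<Longrightarrow> \<phi> z \<le> \<phi> y"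
    using sigma_convex_on_attains_min[OF _ assms(1,2) _ assms(4) \<phi>_sc] assms(7) by blast
  have growth: "\<phi> z + \<sigma> / 2 * (norm (y - z))\<^sup>2 \<le> \<phi> y" if "y \<in> S" for y
    using sigma_convex_on_quadratic_growth[OF \<phi>_sc assms(2) z that] .
  have \<phi>_ge: "F i y - F i x \<le> \<phi> y" if "i < m" for i y
    unfolding \<phi>_def using that by (intro Max_ge) auto
  have "\<phi> x = 0" unfolding \<phi>_def using ne by simp
  then have decrease: "F i z + \<sigma> / 2 * (norm (x - z))\<^sup>2 \<le> F i x" if "i < m" for i
    using \<phi>_ge[OF that, of z] growth[OF assms(7)] by linarith
  have "pareto_optimal S m F z"
    unfolding pareto_optimal_def
  proof (intro conjI notI z(1))
    assume "\<exists>w\<in>S. (\<forall>i<m. F i w \<le> F i z) \<and> (\<exists>i<m. F i w \<noteq> F i z)"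
    then obtain w j where w: "w \<in> S" "\<forall>i<m. F i w \<le> F i z" "j < m" "F j w \<noteq> F j z" by blast
    have "F i w - F i x \<le> \<phi> z" if "i < m" for i
      using w(2) \<phi>_ge[OF that, of z] that by force
    then have "\<phi> w \<le> \<phi> z" unfolding \<phi>_def[of w] using ne by (intro Max.boundedI) auto
    with growth[OF w(1)] have "\<sigma> / 2 * (norm (w - z))\<^sup>2 \<le> 0" by linarith
    with assms(4) have "w = z" by (simp add: mult_le_0_iff)
    with w(4) show False by simp
  qed
  with decrease that show ?thesis by blast
qed

text \<open>A lower bound on one F i0 is needed because SUP of a set of reals that is not bounded
  above is an unspecified value.\<close>

lemma le_merit_u:
  assumes "y \<in> S" "i0 < m" "bdd_below (F i0 ` S)" "l \<ge> 0"
    and "\<And>i. i < m \<Longrightarrow> c \<le> F i x - F i y - l / 2 * (norm (x - y))\<^sup>2"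
  shows "c \<le> merit_u S m F l x"
proof -
  let ?gap = "\<lambda>y. Min ((\<lambda>i. F i x - F i y - l / 2 * (norm (x - y))\<^sup>2) ` {..<m})"
  have "c \<le> ?gap y" using assms(2,5) by (subst Min_ge_iff) auto
  also have "?gap y \<le> merit_u S m F l x"
    unfolding merit_u_def
  proof (rule cSUP_upper[OF assms(1)])
    obtain b where b: "\<And>y. y \<in> S \<Longrightarrow> b \<le> F i0 y" using assms(3) by (auto simp: bdd_below_def)
    have "?gap y \<le> F i0 x - b" if "y \<in> S" for y
    proof -
      have "?gap y \<le> F i0 x - F i0 y - l / 2 * (norm (x - y))\<^sup>2" using assms(2) by (intro Min_le) auto
      moreover have "0 \<le> l / 2 * (norm (x - y))\<^sup>2" using assms(4) by simp
      ultimately show ?thesis using b[OF that] by linarith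
    qed
    then show "bdd_above (?gap ` S)" by (rule bdd_aboveI2)
  qed
  finally show ?thesis .
qed

lemma merit_u_ge_upsilon_dist_pareto_optimal:
  fixes S :: "'a::{real_normed_vector, heine_borel} set"
  assumes "S \<noteq> {}" "closed S" "convex S" "0 < m" "\<sigma> > 0" "l \<ge> 0"
    and "\<And>i. i < m \<Longrightarrow> continuous_on S (F i)"
    and "\<And>i. i < m \<Longrightarrow> sigma_convex_on S \<sigma> (F i)"
    and "x \<in> S"
  obtains z where "pareto_optimal S m F z" "upsilon l \<sigma> * (norm (x - z))\<^sup>2 \<le> merit_u S m F l x"
proof -
  obtain z where z: "pareto_optimal S m F z"
    and decrease: "\<And>i. i < m \<Longrightarrow> F i z + \<sigma> / 2 * (norm (x - z))\<^sup>2 \<le> F i x"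
    using exists_pareto_optimal_uniform_decrease[where F = F, OF assms(2-5,7,8,9)] by blast
  have "z \<in> S" using z unfolding pareto_optimal_def by blast
  obtain a where a: "0 < a" "a \<le> 1" "upsilon l \<sigma> \<le> (2 * a * \<sigma> - a\<^sup>2 * (\<sigma> + l)) / 2"
    using upsilon_le_proximal_decrease[OF assms(5,6)] by blast
  define y where "y = a *\<^sub>R z + (1 - a) *\<^sub>R x"
  have y: "y \<in> S" unfolding y_def using assms(3,9) \<open>z \<in> S\<close> a by (intro convexD) auto
  obtain w where "\<And>y. y \<in> S \<Longrightarrow> F 0 w \<le> F 0 y"
    using sigma_convex_on_attains_min[OF assms(1-3) assms(7)[OF assms(4)] assms(5) assms(8)[OF assms(4)]]
    by blast
  then have bdd: "bdd_below (F 0 ` S)" by (rule bdd_belowI2)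
  have gain: "upsilon l \<sigma> * (norm (x - z))\<^sup>2 \<le> F i x - F i y - l / 2 * (norm (x - y))\<^sup>2"
    if "i < m" for i
  proof -
    have "upsilon l \<sigma> * (norm (x - z))\<^sup>2 \<le> (2 * a * \<sigma> - a\<^sup>2 * (\<sigma> + l)) / 2 * (norm (x - z))\<^sup>2"
      using a(3) by (rule mult_right_mono) simp
    also have "\<dots> \<le> F i x - F i y - l / 2 * (norm (x - y))\<^sup>2"
      unfolding y_def
      using sigma_convex_on_proximal_decrease[OF assms(8)[OF that] assms(9) \<open>z \<in> S\<close> _ a(2) decrease[OF that]] a(1)
      by simp
    finally show ?thesis .
  qed
  have "upsilon l \<sigma> * (norm (x - z))\<^sup>2 \<le> merit_u S m F l x"
    using le_merit_u[where F = F, OF y assms(4) bdd assms(6) gain] .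
  with z that show ?thesis by blast
qed

theorem corollary6p2:
  fixes S :: "'n::euclidean_space set" and m :: nat and F :: "nat \<Rightarrow> 'n \<Rightarrow> real"
    and sig :: "nat \<Rightarrow> real" and l :: real
  assumes "S \<noteq> {}" and "closed S" and "convex S"
    and "m \<ge> 1"
    and "\<And>i. i < m \<Longrightarrow> continuous_on S (F i)"
    and "\<And>i. i < m \<Longrightarrow> sig i > 0"
    and "\<And>i. i < m \<Longrightarrow> sigma_convex_on S (sig i) (F i)"
    and "l \<ge> 0"
  shows "\<forall>x\<in>S. merit_u S m F l x \<ge>
           upsilon l (Min (sig ` {..<m})) *
             (INF xs\<in>{xs. pareto_optimal S m F xs}. (norm (x - xs))\<^sup>2)"
proof
  fix x assume "x \<in> S"
  define \<sigma> where "\<sigma> = Min (sig ` {..<m})"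
  have "0 < m" using assms(4) by simp
  then have "\<sigma> > 0" unfolding \<sigma>_def using assms(6) by (subst Min_gr_iff) auto
  have "sigma_convex_on S \<sigma> (F i)" if "i < m" for i
  proof (rule sigma_convex_on_antimono[OF assms(7)[OF that]])
    show "\<sigma> \<le> sig i" unfolding \<sigma>_def using that by (intro Min_le) auto
  qed
  then obtain z where z: "pareto_optimal S m F z" "upsilon l \<sigma> * (norm (x - z))\<^sup>2 \<le> merit_u S m F l x"
    using merit_u_ge_upsilon_dist_pareto_optimal[where F = F,
        OF assms(1-3) \<open>0 < m\<close> \<open>\<sigma> > 0\<close> assms(8,5) _ \<open>x \<in> S\<close>]
    by blast
  have "bdd_below ((\<lambda>xs. (norm (x - xs))\<^sup>2) ` {xs. pareto_optimal S m F xs})"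
    by (rule bdd_belowI2[where m = 0]) simp
  then have "(INF xs\<in>{xs. pareto_optimal S m F xs}. (norm (x - xs))\<^sup>2) \<le> (norm (x - z))\<^sup>2"
    by (rule cINF_lower) (use z(1) in simp)
  then have "upsilon l \<sigma> * (INF xs\<in>{xs. pareto_optimal S m F xs}. (norm (x - xs))\<^sup>2)
               \<le> upsilon l \<sigma> * (norm (x - z))\<^sup>2"
    using upsilon_nonneg[OF assms(8)] by (rule mult_left_mono)
  with z(2) show "upsilon l (Min (sig ` {..<m})) * (INF xs\<in>{xs. pareto_optimal S m F xs}. (norm (x - xs))\<^sup>2)
                    \<le> merit_u S m F l x"
    unfolding \<sigma>_def by linarith
qed

end
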